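(* Let $P$ be a naf-monotone basic program. A set of atoms $M$ is a weakly well-supported model of $P$ if and only if it is a strongly well-supported model of $P$.
   Context: Fix a countable set $\mathcal{A}$ of atoms. A c-atom is $A=(A_d,A_c)$, $A_d\subseteq\mathcal{A}$, $A_c\subseteq 2^{A_d}$; monotone if $X\subseteq Y\subseteq A_d$, $X\in A_c$ imply $Y\in A_c$; $(\{p\},\{\{p\}\})$ is elementary; $\bot=(\mathcal{A},\emptyset)$; complement $\bar A=(A_d,2^{A_d}\setminus A_c)$. Rule: $A\leftarrow A_1,\dots,A_k,\mathit{not}\,A_{k+1},\dots,\mathit{not}\,A_n$, $head(r)=A$, $pos(r)=\{A_1,..,A_k\}$, $neg(r)=\{A_{k+1},..,A_n\}$. Program = set of rules; basic if every head is elementary or $\bot$; naf-monotone if every c-atom in some $neg(r)$ is monotone. $S\models A$ iff $S\cap A_d\in A_c$; $S\models\mathit{not}\,A$ iff $S\cap A_d\notin A_c$; $S\models body(r)$ if all body literals hold; model = satisfies every rule (head holds or body fails). Conditional satisfaction: $S\models_M A$ iff $S\models A$ and every $I$ with $S\cap A_d\subseteq I\subseteq M\cap A_d$ lies in $A_c$. For $\ell:M\to\{1,2,\dots\}$: $H(X)=\max\{\ell(a)\mid a\in X\}$ ($\max\emptyset=0$), $L(A,M)=\min\{H(X)\mid X\in A_c,\ X\subseteq M,\ X\models_M A\}$, undefined if empty. A model $M$ of $P$ is weakly well-supported iff some $\ell$ satisfies: for each $b\in M$ there is $r\in P$ with $head(r)=(\{b\},\{\{b\}\})$, $M\models body(r)$,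 and $L(A,M)$ defined with $\ell(b)>L(A,M)$ for all $A\in pos(r)$. It is strongly well-supported iff some $\ell$ satisfies the same with the additional requirement that $L(\bar A,M)$ is defined and $\ell(b)>L(\bar A,M)$ for all $A\in neg(r)$. *)

theory Defs
  imports Main "HOL-Library.Countable"
begin

text \<open>Atoms: the universe of a countable type 'a (the fixed countable set of atoms).
  A c-atom is a pair (A_d, A_c).\<close>

type_synonym 'a catom = "'a set \<times> 'a set set"

definition is_catom :: "'a catom \<Rightarrow> bool" where
  "is_catom A \<longleftrightarrow> snd A \<subseteq> Pow (fst A)"

definition monotone_catom :: "'a catom \<Rightarrow> bool" where
  "monotone_catom A \<longleftrightarrow>
     (\<forall>X Y. X \<subseteq> Y \<and> Y \<subseteq> fst A \<and> X \<in> snd A \<longrightarrow> Y \<in> snd A)"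

definition elem :: "'a \<Rightarrow> 'a catom" where
  "elem p = ({p}, {{p}})"

definition bot_catom :: "('a::countable) catom" where
  "bot_catom = (UNIV, {})"

definition compl_catom :: "'a catom \<Rightarrow> 'a catom" where
  "compl_catom A = (fst A, Pow (fst A) - snd A)"

type_synonym 'a rule = "'a catom \<times> 'a catom list \<times> 'a catom list"

definition head :: "'a rule \<Rightarrow> 'a catom" where "head r = fst r"
definition pos :: "'a rule \<Rightarrow> 'a catom set" where "pos r = set (fst (snd r))"
definition neg :: "'a rule \<Rightarrow> 'a catom set" where "neg r = set (snd (snd r))"

type_synonym 'a program = "'a rule set"

definition program_wf :: "'a program \<Rightarrow> bool" where
  "program_wf P \<longleftrightarrow> (\<forall>r\<in>P. is_catom (head r) \<and> (\<forall>A\<in>pos r. is_catom A) \<and> (\<forall>A\<in>neg r. is_catom A))"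

definition basic :: "('a::countable) program \<Rightarrow> bool" where
  "basic P \<longleftrightarrow> (\<forall>r\<in>P. (\<exists>p. head r = elem p) \<or> head r = bot_catom)"

definition naf_monotone :: "'a program \<Rightarrow> bool" where
  "naf_monotone P \<longleftrightarrow> (\<forall>r\<in>P. \<forall>A\<in>neg r. monotone_catom A)"

definition sat :: "'a set \<Rightarrow> 'a catom \<Rightarrow> bool" where
  "sat S A \<longleftrightarrow> S \<inter> fst A \<in> snd A"

definition sat_body :: "'a set \<Rightarrow> 'a rule \<Rightarrow> bool" where
  "sat_body S r \<longleftrightarrow> (\<forall>A\<in>pos r. sat S A) \<and> (\<forall>A\<in>neg r. \<not> sat S A)"

definition is_model :: "'a set \<Rightarrow> 'a program \<Rightarrow> bool" where
  "is_model M P \<longleftrightarrow> (\<forall>r\<in>P. sat_body M r \<longrightarrow> sat M (head r))"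

definition csat :: "'a set \<Rightarrow> 'a set \<Rightarrow> 'a catom \<Rightarrow> bool" where
  "csat M S A \<longleftrightarrow> sat S A \<and> (\<forall>I. S \<inter> fst A \<subseteq> I \<and> I \<subseteq> M \<inter> fst A \<longrightarrow> I \<in> snd A)"

definition Hlev :: "('a \<Rightarrow> nat) \<Rightarrow> 'a set \<Rightarrow> nat option" where
  "Hlev l X = (if finite (l ` X) then Some (Max (insert 0 (l ` X))) else None)"

definition Llev :: "('a \<Rightarrow> nat) \<Rightarrow> 'a catom \<Rightarrow> 'a set \<Rightarrow> nat option" where
  "Llev l A M =
     (let V = {h. \<exists>X. X \<in> snd A \<and> X \<subseteq> M \<and> csat M X A \<and> Hlev l X = Some h}
      in if V = {} then None else Some (LEAST h. h \<in> V))"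

definition weakly_well_supported :: "'a set \<Rightarrow> 'a program \<Rightarrow> bool" where
  "weakly_well_supported M P \<longleftrightarrow> is_model M P \<and>
     (\<exists>l :: 'a \<Rightarrow> nat. (\<forall>a\<in>M. l a \<ge> 1) \<and>
        (\<forall>b\<in>M. \<exists>r\<in>P. head r = elem b \<and> sat_body M r \<and>
           (\<forall>A\<in>pos r. \<exists>k. Llev l A M = Some k \<and> l b > k)))"

definition strongly_well_supported :: "'a set \<Rightarrow> 'a program \<Rightarrow> bool" where
  "strongly_well_supported M P \<longleftrightarrow> is_model M P \<and>
     (\<exists>l :: 'a \<Rightarrow> nat. (\<forall>a\<in>M. l a \<ge> 1) \<and>
        (\<forall>b\<in>M. \<exists>r\<in>P. head r = elem b \<and> sat_body M r \<and>
           (\<forall>A\<in>pos r. \<exists>k. Llev l A M = Some k \<and> l b > k) \<and>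
           (\<forall>A\<in>neg r. \<exists>k. Llev l (compl_catom A) M = Some k \<and> l b > k)))"

end

theory Submission
  imports Defs
begin

(* Strong well-support only adds, for every negated c-atom A of the
   supporting rule of an atom b, the requirement l(b) > L(complement of A, M).
   When A is monotone and M does not satisfy A, no subset of M intersected with A_d
   lies in A_c (otherwise monotonicity would put M intersected with A_d itself there).
   Hence the empty set conditionally satisfies the complement of A with respect to M,
   and since H(empty set) = 0 the level L(complement of A, M) is 0.  As every atom of
   M has level at least 1, the extra requirement holds automatically. *)

lemma Hlev_empty: "Hlev l {} = Some 0"
  unfolding Hlev_def by simp

lemma Llev_empty_witness:
  assumes "{} \<in> snd A" and "csat M {} A"
  shows "Llev l A M = Some 0"
proof -
  define V where "V = {h. \<exists>X. X \<in> snd A \<and> X \<subseteq> M \<and> csat M X A \<and> Hlev l X = Some h}"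
  have "0 \<in> V"
    unfolding V_def using assms Hlev_empty by blast
  then have "V \<noteq> {}" and "(LEAST h. h \<in> V) = 0"
    by (auto intro: Least_equality)
  then show ?thesis
    unfolding Llev_def V_def[symmetric] by simp
qed

text \<open>A monotone c-atom that is false in \<open>M\<close> has no member inside \<open>M \<inter> A\<^sub>d\<close>;
  otherwise monotonicity would make \<open>M \<inter> A\<^sub>d\<close> itself a member.\<close>

lemma monotone_false_no_member:
  assumes mono: "monotone_catom A" and false: "\<not> sat M A" and I: "I \<subseteq> M \<inter> fst A"
  shows "I \<notin> snd A"
proof
  assume "I \<in> snd A"
  with I mono have "M \<inter> fst A \<in> snd A"
    unfolding monotone_catom_def by blast
  with false show False
    unfolding sat_def by simp
qed

lemma Llev_compl_monotone_false:
  assumes mono: "monotone_catom A" and false: "\<not> sat M A"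
  shows "Llev l (compl_catom A) M = Some 0"
proof (rule Llev_empty_witness)
  have no_member: "I \<notin> snd A" if "I \<subseteq> M \<inter> fst A" for I
    using monotone_false_no_member[OF mono false that] .
  show "{} \<in> snd (compl_catom A)"
    using no_member[of "{}"] unfolding compl_catom_def by simp
  show "csat M {} (compl_catom A)"
    using no_member unfolding csat_def sat_def compl_catom_def by auto
qed

lemma naf_monotone_neg_levels:
  assumes nafmon: "naf_monotone P" and r: "r \<in> P" and body: "sat_body M r"
    and level: "l b \<ge> 1"
  shows "\<forall>A\<in>neg r. \<exists>k. Llev l (compl_catom A) M = Some k \<and> l b > k"
proof
  fix A assume A: "A \<in> neg r"
  have "monotone_catom A"
    using nafmon r A unfolding naf_monotone_def by blast
  moreover have "\<not> sat M A"
    using body A unfolding sat_body_def by blast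
  ultimately have "Llev l (compl_catom A) M = Some 0"
    by (rule Llev_compl_monotone_false)
  with level show "\<exists>k. Llev l (compl_catom A) M = Some k \<and> l b > k"
    by simp
qed

lemma strongly_imp_weakly_well_supported:
  "strongly_well_supported M P \<Longrightarrow> weakly_well_supported M P"
  unfolding weakly_well_supported_def strongly_well_supported_def by blast

lemma weakly_imp_strongly_well_supported:
  assumes nafmon: "naf_monotone P" and weak: "weakly_well_supported M P"
  shows "strongly_well_supported M P"
proof -
  obtain l :: "'a \<Rightarrow> nat" where pos_levels: "\<forall>a\<in>M. l a \<ge> 1" and
    support: "\<forall>b\<in>M. \<exists>r\<in>P. head r = elem b \<and> sat_body M r \<and>
               (\<forall>A\<in>pos r. \<exists>k. Llev l A M = Some k \<and> l b > k)"
    using weak unfolding weakly_well_supported_def by blast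
  have "\<forall>b\<in>M. \<exists>r\<in>P. head r = elem b \<and> sat_body M r \<and>
          (\<forall>A\<in>pos r. \<exists>k. Llev l A M = Some k \<and> l b > k) \<and>
          (\<forall>A\<in>neg r. \<exists>k. Llev l (compl_catom A) M = Some k \<and> l b > k)"
    using support pos_levels naf_monotone_neg_levels[OF nafmon] by metis
  with weak pos_levels show ?thesis
    unfolding weakly_well_supported_def strongly_well_supported_def by blast
qed

text \<open>The main result.\<close>

theorem corollary4:
  fixes P :: "('a::countable) program" and M :: "'a set"
  assumes "program_wf P" and "basic P" and "naf_monotone P"
  shows "weakly_well_supported M P \<longleftrightarrow> strongly_well_supported M P"
  using weakly_imp_strongly_well_supported[OF assms(3)] strongly_imp_weakly_well_supported
  by blast

end
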